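(* Let $n\ge2$, and let $\rho_1,\ldots,\rho_n>0$ and $\theta>0$ be (sufficiently smooth) functions on a domain in $\mathbb{R}^3$, with $\rho=\sum_{i=1}^n\rho_i$ and $\mu_i=\theta(\log(\rho_i/\theta)+1)$. Let $b_{ij}=b_{ji}>0$ ($i\ne j$) be friction coefficients, and let $B=(B_{ij})$ be given by $B_{ii}=\sum_{j\ne i}b_{ij}\rho_j$ and $B_{ij}=-b_{ij}\rho_i$ for $j\ne i$; let $B^\#$ be the group inverse of $B$, i.e. the matrix satisfying $BB^\#=B^\#B=I-(\boldsymbol\rho/\rho)\otimes\boldsymbol1$, $\sum_jB^\#_{ij}\rho_j=0$ and $\sum_jB^\#_{ji}=0$ for all $i$. Let $P=(P_{ij})$ with $P_{ij}=\delta_{ij}-\rho_j/\rho$. Let $\bar q_1,\ldots,\bar q_n\in\mathbb{R}$ satisfy $\sum_{i=1}^n\bar q_i\rho_i=0$, and define the driving forces $$d_i=\rho_i\nabla\frac{\mu_i}{\theta}-\frac{\rho_i}{\rho\theta}\nabla(\rho\theta)-2\rho_i\theta\nabla\frac1\theta+\bar q_i\rho_i\nabla\log\theta,\quad i=1,\ldots,n.$$ Suppose that the fluxes $J_1,\ldots,J_n$ satisfy $\sum_{i=1}^nJ_i=0$ and the Maxwell–Stefan relations $d_i=-\sum_{j=1}^nb_{ij}\rho_i\rho_j\big(\frac{J_i}{\rho_i}-\frac{J_j}{\rho_j}\big)$, $i=1,\ldots,n$. Then $$J_i=-\sum_{j=1}^nM_{ij}\nabla\frac{\mu_j}{\theta}-M_i\nabla\frac1\theta,\qquad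 M_{ij}=\sum_{k=1}^nB^\#_{ik}\rho_kP_{kj},\quad M_i=-\theta\sum_{k=1}^nB^\#_{ik}\rho_k\bar q_k,$$ where the matrix $(M_{ij})$ is symmetric and $\sum_{i=1}^nM_{ij}=0$ for all $j$ and $\sum_{i=1}^nM_i=0$.
   Context: For vectors $a,b\in\mathbb{R}^n$, $(a\otimes b)_{ij}=a_ib_j$; $\boldsymbol1=(1,\ldots,1)$, $\boldsymbol\rho=(\rho_1,\ldots,\rho_n)$. Note $\nabla(\mu_j/\theta)=\nabla q_j$ with $q_j=\log(\rho_j/\theta)$ the thermo-chemical potentials, so the conclusion is the Fick–Onsager form of the fluxes. (The paper denotes the real numbers $\bar q_i$ by $q_i$; they are renamed here to avoid a clash with the thermo-chemical potentials.) *)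

theory Defs
  imports "HOL-Analysis.Analysis"
begin

definition grad :: "(real^3 \<Rightarrow> real) \<Rightarrow> real^3 \<Rightarrow> real^3" where
  "grad f x = (\<chi> k. frechet_derivative f (at x) (axis k 1))"

definition rho_tot :: "('n::finite \<Rightarrow> real^3 \<Rightarrow> real) \<Rightarrow> real^3 \<Rightarrow> real" where
  "rho_tot \<rho> x = (\<Sum>i\<in>UNIV. \<rho> i x)"

definition chem_pot :: "('n \<Rightarrow> real^3 \<Rightarrow> real) \<Rightarrow> (real^3 \<Rightarrow> real) \<Rightarrow> 'n \<Rightarrow> real^3 \<Rightarrow> real" where
  "chem_pot \<rho> \<theta> i x = \<theta> x * (ln (\<rho> i x / \<theta> x) + 1)"

definition fricB :: "('n::finite \<Rightarrow> 'n \<Rightarrow> real) \<Rightarrow> ('n \<Rightarrow> real^3 \<Rightarrow> real) \<Rightarrow> real^3 \<Rightarrow> 'n \<Rightarrow> 'n \<Rightarrow> real" where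
  "fricB b \<rho> x i j = (if i = j then (\<Sum>k\<in>UNIV - {i}. b i k * \<rho> k x) else - b i j * \<rho> i x)"

definition is_group_inv :: "('n::finite \<Rightarrow> 'n \<Rightarrow> real) \<Rightarrow> ('n \<Rightarrow> 'n \<Rightarrow> real) \<Rightarrow> ('n \<Rightarrow> real) \<Rightarrow> bool" where
  "is_group_inv B Bs r \<longleftrightarrow>
     (\<forall>i j. (\<Sum>k\<in>UNIV. B i k * Bs k j) = (if i = j then 1 else 0) - r i / (\<Sum>l\<in>UNIV. r l)) \<and>
     (\<forall>i j. (\<Sum>k\<in>UNIV. Bs i k * B k j) = (if i = j then 1 else 0) - r i / (\<Sum>l\<in>UNIV. r l)) \<and>
     (\<forall>i. (\<Sum>j\<in>UNIV. Bs i j * r j) = 0) \<and>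
     (\<forall>i. (\<Sum>j\<in>UNIV. Bs j i) = 0)"

definition drive :: "('n::finite \<Rightarrow> real^3 \<Rightarrow> real) \<Rightarrow> (real^3 \<Rightarrow> real) \<Rightarrow> ('n \<Rightarrow> real) \<Rightarrow> 'n \<Rightarrow> real^3 \<Rightarrow> real^3" where
  "drive \<rho> \<theta> qb i x =
     \<rho> i x *\<^sub>R grad (\<lambda>y. chem_pot \<rho> \<theta> i y / \<theta> y) x
     - (\<rho> i x / (rho_tot \<rho> x * \<theta> x)) *\<^sub>R grad (\<lambda>y. rho_tot \<rho> y * \<theta> y) x
     - (2 * \<rho> i x * \<theta> x) *\<^sub>R grad (\<lambda>y. 1 / \<theta> y) x
     + (qb i * \<rho> i x) *\<^sub>R grad (\<lambda>y. ln (\<theta> y)) x"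

end

theory Submission
  imports Defs
begin

text \<open>Only pointwise linear algebra is involved. The Maxwell--Stefan relations say \<open>d = -B J\<close>.
  Applying the group inverse and using \<open>B\<^sup>#B = I - (\<rho>/\<rho>) \<otimes> 1\<close> together with \<open>\<Sum> J\<^sub>i = 0\<close>
  gives \<open>J = -B\<^sup># d\<close>. Since \<open>B\<^sup>#\<rho> = 0\<close>, the terms of \<open>d\<^sub>i\<close> of the form \<open>\<rho>\<^sub>i V\<close> with \<open>V\<close>
  independent of \<open>i\<close> disappear, and \<open>\<nabla> log \<theta> = -\<theta> \<nabla>(1/\<theta>)\<close> yields the stated fluxes; \<open>P\<close> may
  be dropped from \<open>M\<close> for the same reason. Symmetry of \<open>M = B\<^sup># diag(\<rho>)\<close> is inherited from
  that of \<open>B diag(\<rho>)\<close>, and the zero column sums of \<open>B\<^sup>#\<close> give the remaining identities.\<close>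

lemma sum_mult_delta_minus_const:
  fixes f :: "'n::finite \<Rightarrow> 'a::comm_ring_1"
  shows "(\<Sum>k\<in>UNIV. f k * ((if k = j then 1 else 0) - c)) = f j - c * (\<Sum>k\<in>UNIV. f k)"
proof -
  have "f k * ((if k = j then 1 else 0) - c) = (if k = j then f k else 0) - c * f k" for k
    by (simp add: algebra_simps)
  then show ?thesis by (simp add: sum_subtractf sum_distrib_left)
qed

lemma sum_delta_minus_const_scaleR:
  fixes v :: "'n::finite \<Rightarrow> 'v::real_vector"
  shows "(\<Sum>k\<in>UNIV. ((if j = k then 1 else 0) - c) *\<^sub>R v k) = v j - c *\<^sub>R (\<Sum>k\<in>UNIV. v k)"
proof -
  have "((if j = k then 1 else 0) - c) *\<^sub>R v k = (if j = k then v k else 0) - c *\<^sub>R v k" for k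
    by (simp add: scaleR_left_diff_distrib)
  then show ?thesis by (simp add: sum_subtractf scaleR_sum_right)
qed

lemma left_group_inverse_weighted_symmetric:
  fixes B S :: "'n::finite \<Rightarrow> 'n \<Rightarrow> 'a::comm_ring_1"
  assumes SB: "\<And>i j. (\<Sum>k\<in>UNIV. S i k * B k j) = (if i = j then 1 else 0) - u i"
    and Sr: "\<And>i. (\<Sum>k\<in>UNIV. S i k * r k) = 0"
    and Br_sym: "\<And>k l. B k l * r l = B l k * r k"
  shows "S i j * r j = S j i * r i"
proof -
  have Sr_delta: "(\<Sum>l\<in>UNIV. S a l * r l * ((if l = c then 1 else 0) - u c)) = S a c * r c" for a c
    using Sr by (simp add: sum_mult_delta_minus_const)
  have "S i j * r j = (\<Sum>l\<in>UNIV. S i l * r l * (\<Sum>k\<in>UNIV. S j k * B k l))"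
    using Sr_delta[of i j] by (simp add: SB eq_commute[of l j for l])
  also have "\<dots> = (\<Sum>k\<in>UNIV. \<Sum>l\<in>UNIV. S j k * S i l * (B k l * r l))"
    by (subst sum.swap) (simp add: sum_distrib_left mult_ac)
  also have "\<dots> = (\<Sum>k\<in>UNIV. \<Sum>l\<in>UNIV. S j k * S i l * (B l k * r k))"
    by (simp only: Br_sym)
  also have "\<dots> = (\<Sum>k\<in>UNIV. S j k * r k * (\<Sum>l\<in>UNIV. S i l * B l k))"
    by (simp add: sum_distrib_left mult_ac)
  also have "\<dots> = S j i * r i"
    using Sr_delta[of j i] by (simp add: SB eq_commute[of i k for k])
  finally show ?thesis .
qed

lemma left_group_inverse_solves:
  fixes B S :: "'n::finite \<Rightarrow> 'n \<Rightarrow> real" and J :: "'n \<Rightarrow> 'v::real_vector"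
  assumes SB: "\<And>i j. (\<Sum>k\<in>UNIV. S i k * B k j) = (if i = j then 1 else 0) - u i"
    and J_sum: "(\<Sum>j\<in>UNIV. J j) = 0"
  shows "(\<Sum>k\<in>UNIV. S i k *\<^sub>R (\<Sum>j\<in>UNIV. B k j *\<^sub>R J j)) = J i"
proof -
  have "(\<Sum>k\<in>UNIV. S i k *\<^sub>R (\<Sum>j\<in>UNIV. B k j *\<^sub>R J j))
      = (\<Sum>k\<in>UNIV. \<Sum>j\<in>UNIV. (S i k * B k j) *\<^sub>R J j)"
    by (simp add: scaleR_sum_right)
  also have "\<dots> = (\<Sum>j\<in>UNIV. (\<Sum>k\<in>UNIV. S i k * B k j) *\<^sub>R J j)"
    by (subst sum.swap) (simp add: scaleR_sum_left)
  also have "\<dots> = J i"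
    by (simp add: SB sum_delta_minus_const_scaleR J_sum)
  finally show ?thesis .
qed

lemma sum_columns_zero_weighted:
  fixes S :: "'n::finite \<Rightarrow> 'n \<Rightarrow> 'a::comm_ring_1"
  assumes "\<And>j. (\<Sum>i\<in>UNIV. S i j) = 0"
  shows "(\<Sum>i\<in>UNIV. \<Sum>k\<in>UNIV. S i k * w k) = 0"
  by (subst sum.swap) (simp add: sum_distrib_right[symmetric] assms)

lemma fricB_weighted_symmetric:
  assumes "\<And>i j. b i j = b j i"
  shows "fricB b \<rho> x k l * \<rho> l x = fricB b \<rho> x l k * \<rho> k x"
  using assms unfolding fricB_def by (auto simp: mult_ac)

lemma maxwell_stefan_eq_fricB:
  fixes J :: "'n::finite \<Rightarrow> 'v::real_vector"
  assumes pos: "\<And>j. \<rho> j x \<noteq> 0"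
  shows "(\<Sum>j\<in>UNIV. (b i j * \<rho> i x * \<rho> j x) *\<^sub>R (J i /\<^sub>R \<rho> i x - J j /\<^sub>R \<rho> j x))
       = (\<Sum>j\<in>UNIV. fricB b \<rho> x i j *\<^sub>R J j)"
proof -
  have term_j: "(b i j * \<rho> i x * \<rho> j x) *\<^sub>R (J i /\<^sub>R \<rho> i x - J j /\<^sub>R \<rho> j x)
      = (b i j * \<rho> j x) *\<^sub>R J i - (b i j * \<rho> i x) *\<^sub>R J j" for j
    using pos[of i] pos[of j] by (simp add: scaleR_right_diff_distrib field_simps)
  have "(\<Sum>j\<in>UNIV. (b i j * \<rho> i x * \<rho> j x) *\<^sub>R (J i /\<^sub>R \<rho> i x - J j /\<^sub>R \<rho> j x))
      = (\<Sum>j\<in>UNIV - {i}. (b i j * \<rho> j x) *\<^sub>R J i - (b i j * \<rho> i x) *\<^sub>R J j)"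
    by (simp add: sum.remove[of UNIV i] term_j)
  also have "\<dots> = (\<Sum>j\<in>UNIV. fricB b \<rho> x i j *\<^sub>R J j)"
    by (simp add: sum.remove[of UNIV i] fricB_def sum_subtractf sum_negf scaleR_sum_left)
  finally show ?thesis .
qed

lemma maxwell_stefan_inversion:
  fixes S :: "'n::finite \<Rightarrow> 'n \<Rightarrow> real" and J d :: "'n \<Rightarrow> 'v::real_vector"
  assumes pos: "\<And>j. \<rho> j x \<noteq> 0"
    and SB: "\<And>i j. (\<Sum>k\<in>UNIV. S i k * fricB b \<rho> x k j) = (if i = j then 1 else 0) - u i"
    and J_sum: "(\<Sum>j\<in>UNIV. J j) = 0"
    and MS: "\<And>i. d i = - (\<Sum>j\<in>UNIV. (b i j * \<rho> i x * \<rho> j x) *\<^sub>R (J i /\<^sub>R \<rho> i x - J j /\<^sub>R \<rho> j x))"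
  shows "J i = - (\<Sum>k\<in>UNIV. S i k *\<^sub>R d k)"
  using left_group_inverse_solves[OF SB J_sum, of i]
  by (simp add: MS maxwell_stefan_eq_fricB[where \<rho> = \<rho> and x = x, OF pos] sum_negf)

lemma grad_ln_eq_scaleR_grad_inverse:
  assumes pos: "\<theta> x > 0" and diff: "\<theta> differentiable (at x)"
  shows "grad (\<lambda>y. ln (\<theta> y)) x = (- \<theta> x) *\<^sub>R grad (\<lambda>y. 1 / \<theta> y) x"
proof -
  obtain D where D: "(\<theta> has_derivative D) (at x)"
    using diff unfolding differentiable_def by blast
  have "((\<lambda>y. ln (\<theta> y)) has_derivative (\<lambda>v. inverse (\<theta> x) * D v)) (at x)"
    using has_derivative_ln[OF pos D] by (simp add: mult.commute)
  moreover have "((\<lambda>y. 1 / \<theta> y) has_derivative (\<lambda>v. - (inverse (\<theta> x) * D v * inverse (\<theta> x)))) (at x)"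
    using Deriv.has_derivative_inverse[OF _ D] pos by (simp add: divide_inverse)
  ultimately show ?thesis
    using pos unfolding grad_def by (simp add: frechet_derivative_at[symmetric] vec_eq_iff field_simps)
qed

lemma drive_kernel_sum:
  fixes S :: "'n::finite \<Rightarrow> real"
  assumes S\<rho>: "(\<Sum>k\<in>UNIV. S k * \<rho> k x) = 0"
  shows "(\<Sum>k\<in>UNIV. S k *\<^sub>R drive \<rho> \<theta> qb k x)
       = (\<Sum>k\<in>UNIV. (S k * \<rho> k x) *\<^sub>R grad (\<lambda>y. chem_pot \<rho> \<theta> k y / \<theta> y) x)
         + (\<Sum>k\<in>UNIV. S k * \<rho> k x * qb k) *\<^sub>R grad (\<lambda>y. ln (\<theta> y)) x"
proof -
  define V where "V = (1 / (rho_tot \<rho> x * \<theta> x)) *\<^sub>R grad (\<lambda>y. rho_tot \<rho> y * \<theta> y) x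
                      + (2 * \<theta> x) *\<^sub>R grad (\<lambda>y. 1 / \<theta> y) x"
  have "S k *\<^sub>R drive \<rho> \<theta> qb k x = (S k * \<rho> k x) *\<^sub>R grad (\<lambda>y. chem_pot \<rho> \<theta> k y / \<theta> y) x
      + (S k * \<rho> k x * qb k) *\<^sub>R grad (\<lambda>y. ln (\<theta> y)) x - (S k * \<rho> k x) *\<^sub>R V" for k
    unfolding drive_def V_def by (simp add: algebra_simps)
  then show ?thesis
    by (simp add: sum.distrib sum_subtractf scaleR_sum_left[symmetric] S\<rho>)
qed

theorem proposition2p1:
  fixes \<Omega> :: "(real^3) set"
    and \<rho> :: "'n::finite \<Rightarrow> real^3 \<Rightarrow> real"
    and \<theta> :: "real^3 \<Rightarrow> real"
    and b :: "'n \<Rightarrow> 'n \<Rightarrow> real"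
    and Bs :: "real^3 \<Rightarrow> 'n \<Rightarrow> 'n \<Rightarrow> real"
    and qb :: "'n \<Rightarrow> real"
    and J :: "'n \<Rightarrow> real^3 \<Rightarrow> real^3"
  assumes n2: "CARD('n) \<ge> 2"
    and dom: "open \<Omega>" "connected \<Omega>"
    and rho_pos: "\<And>i x. x \<in> \<Omega> \<Longrightarrow> \<rho> i x > 0"
    and theta_pos: "\<And>x. x \<in> \<Omega> \<Longrightarrow> \<theta> x > 0"
    and rho_diff: "\<And>i x. x \<in> \<Omega> \<Longrightarrow> \<rho> i differentiable (at x)"
    and theta_diff: "\<And>x. x \<in> \<Omega> \<Longrightarrow> \<theta> differentiable (at x)"
    and b_sym: "\<And>i j. b i j = b j i"
    and b_pos: "\<And>i j. i \<noteq> j \<Longrightarrow> b i j > 0"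
    and Bs_ginv: "\<And>x. x \<in> \<Omega> \<Longrightarrow> is_group_inv (fricB b \<rho> x) (Bs x) (\<lambda>i. \<rho> i x)"
    and qb_orth: "\<And>x. x \<in> \<Omega> \<Longrightarrow> (\<Sum>i\<in>UNIV. qb i * \<rho> i x) = 0"
    and J_sum: "\<And>x. x \<in> \<Omega> \<Longrightarrow> (\<Sum>i\<in>UNIV. J i x) = 0"
    and MS: "\<And>i x. x \<in> \<Omega> \<Longrightarrow> drive \<rho> \<theta> qb i x =
              - (\<Sum>j\<in>UNIV. (b i j * \<rho> i x * \<rho> j x) *\<^sub>R (J i x /\<^sub>R \<rho> i x - J j x /\<^sub>R \<rho> j x))"
  shows "\<forall>x\<in>\<Omega>.
    (let P = (\<lambda>k j. (if k = j then 1 else 0) - \<rho> j x / rho_tot \<rho> x);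
         M = (\<lambda>i j. \<Sum>k\<in>UNIV. Bs x i k * \<rho> k x * P k j);
         Mv = (\<lambda>i. - \<theta> x * (\<Sum>k\<in>UNIV. Bs x i k * \<rho> k x * qb k))
     in (\<forall>i. J i x = - (\<Sum>j\<in>UNIV. M i j *\<^sub>R grad (\<lambda>y. chem_pot \<rho> \<theta> j y / \<theta> y) x)
                       - Mv i *\<^sub>R grad (\<lambda>y. 1 / \<theta> y) x)
      \<and> (\<forall>i j. M i j = M j i)
      \<and> (\<forall>j. (\<Sum>i\<in>UNIV. M i j) = 0)
      \<and> (\<Sum>i\<in>UNIV. Mv i) = 0)"
proof
  fix x assume x: "x \<in> \<Omega>"
  have SB: "\<And>i j. (\<Sum>k\<in>UNIV. Bs x i k * fricB b \<rho> x k j) = (if i = j then 1 else 0) - \<rho> i x / rho_tot \<rho> x"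
    and S\<rho>: "\<And>i. (\<Sum>k\<in>UNIV. Bs x i k * \<rho> k x) = 0"
    and S_cols: "\<And>j. (\<Sum>i\<in>UNIV. Bs x i j) = 0"
    using Bs_ginv[OF x] by (auto simp: is_group_inv_def rho_tot_def)
  have flux: "J i x = - (\<Sum>j\<in>UNIV. (Bs x i j * \<rho> j x) *\<^sub>R grad (\<lambda>y. chem_pot \<rho> \<theta> j y / \<theta> y) x)
      - (- \<theta> x * (\<Sum>k\<in>UNIV. Bs x i k * \<rho> k x * qb k)) *\<^sub>R grad (\<lambda>y. 1 / \<theta> y) x" for i
    using maxwell_stefan_inversion[OF _ SB J_sum[OF x] MS[OF x]] rho_pos[OF x]
      drive_kernel_sum[where S = "Bs x i" and \<rho> = \<rho> and x = x, OF S\<rho>]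
      grad_ln_eq_scaleR_grad_inverse[OF theta_pos[OF x] theta_diff[OF x]]
    by (simp add: less_imp_neq[symmetric])
  have M_sym: "Bs x i j * \<rho> j x = Bs x j i * \<rho> i x" for i j
    using left_group_inverse_weighted_symmetric[OF SB S\<rho> fricB_weighted_symmetric[OF b_sym]] .
  have M_cols: "(\<Sum>i\<in>UNIV. Bs x i j * \<rho> j x) = 0" for j
    by (simp add: sum_distrib_right[symmetric] S_cols)
  have Mv_sum: "(\<Sum>i\<in>UNIV. - \<theta> x * (\<Sum>k\<in>UNIV. Bs x i k * \<rho> k x * qb k)) = 0"
    using sum_columns_zero_weighted[where S = "Bs x", OF S_cols]
    by (simp add: sum_negf sum_distrib_left[symmetric] mult.assoc)
  show "let P = (\<lambda>k j. (if k = j then 1 else 0) - \<rho> j x / rho_tot \<rho> x);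
         M = (\<lambda>i j. \<Sum>k\<in>UNIV. Bs x i k * \<rho> k x * P k j);
         Mv = (\<lambda>i. - \<theta> x * (\<Sum>k\<in>UNIV. Bs x i k * \<rho> k x * qb k))
     in (\<forall>i. J i x = - (\<Sum>j\<in>UNIV. M i j *\<^sub>R grad (\<lambda>y. chem_pot \<rho> \<theta> j y / \<theta> y) x)
                       - Mv i *\<^sub>R grad (\<lambda>y. 1 / \<theta> y) x)
      \<and> (\<forall>i j. M i j = M j i)
      \<and> (\<forall>j. (\<Sum>i\<in>UNIV. M i j) = 0)
      \<and> (\<Sum>i\<in>UNIV. Mv i) = 0"
    unfolding Let_def sum_mult_delta_minus_const S\<rho> mult_zero_right diff_zero
    using flux M_sym M_cols Mv_sum by blast
qed

end
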